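(* Let $\alpha_a$ be a labeled dGL hybrid game, $\varphi$ a dGL formula, and $S$ an Angelic subvalue map for $\alpha_a$ compatible with $\varphi$, i.e. $\models S(b)\rightarrow\langle \mathrm{suffix}_b(\alpha_a)\rangle S(\mathsf{end})$ for every $b\in\mathrm{nodes}(\alpha_a)$ and $\models S(\mathsf{end})\rightarrow\varphi$. Then for every subgame label $b\in\mathrm{nodes}(\alpha_a)$, every state satisfying $S(a)$ satisfies $$\big\langle \mathrm{prefix}_b(\mathcal{U}(\alpha_a,S))\big\rangle\,\big\langle \mathrm{suffix}_b(\alpha_a)\big\rangle\,\varphi .$$
   Context: Differential game logic (dGL). Hybrid games are generated by $\alpha,\beta ::= x:=e \mid \alpha;\beta \mid ?Q \mid \{x'=f(x)\,\&\,Q\} \mid \alpha^{*} \mid \alpha\cup\beta \mid x:=* \mid\ !Q \mid \{x'=f(x)\,\&\,Q\}^{d} \mid \alpha^{\times} \mid \alpha\cap\beta \mid x:=\otimes$, with $x$ a real variable (vector for ODEs), $e,f(x)$ polynomial terms, $Q$ a formula. Players Angel and Demon: $x:=e$ deterministic assignment; in $x:=*$ Angel (in $x:=\otimes$ Demon) assigns any real to $x$; in $\{x'=f(x)\&Q\}$ Angel (in $\{x'=f(x)\&Q\}^d$ Demon) chooses a duration $r\ge 0$ of following the ODE with $Q$ true throughout; $?Q$ makes Angel lose and $!Q$ makes Demon lose if $Q$ is false (no effect otherwise); in $\alpha\cup\beta$ Angel (in $\alpha\cap\beta$ Demon) chooses the branch; in $\alpha^*$ Angel (in $\alpha^\times$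 Demon) decides before each iteration whether to repeat $\alpha$ or stop; $\alpha;\beta$ is sequential composition. $\mathrm{skip}$ denotes $?\mathit{true}$. Formulas: polynomial (in)equalities closed under connectives, real quantifiers, and modalities $\langle\alpha\rangle\varphi$ (Angel has a winning strategy in $\alpha$ to reach $\varphi$ whatever Demon does) and $[\alpha]\varphi\equiv\neg\langle\alpha\rangle\neg\varphi$, with the standard dGL semantics: $\langle x:=e\rangle\varphi\leftrightarrow\varphi(x\mapsto e)$, $\langle x:=*\rangle\varphi\leftrightarrow\exists x\varphi$, $\langle x:=\otimes\rangle\varphi\leftrightarrow\forall x\varphi$, $\langle ?Q\rangle\varphi\leftrightarrow Q\wedge\varphi$, $\langle !Q\rangle\varphi\leftrightarrow(Q\rightarrow\varphi)$, $\langle\alpha\cup\beta\rangle\varphi\leftrightarrow\langle\alpha\rangle\varphi\vee\langle\beta\rangle\varphi$, $\langle\alpha\cap\beta\rangle\varphi\leftrightarrow\langle\alpha\rangle\varphi\wedge\langle\beta\rangle\varphi$, $\langle\alpha;\beta\rangle\varphi\leftrightarrow\langle\alpha\rangle\langle\beta\rangle\varphi$; the Angel ODE holds iff some solution of some duration $r\ge0$ staying in $Q$ ends in $\varphi$, the Demon ODE iff all such solutions end in $\varphi$; $\langle\alpha^*\rangle\varphi$ denotes the least set $Z$ of states with $[\![\varphi]\!]\cup\varsigma_\alpha(Z)\subseteq Z$ and $\langle\alpha^\times\rangle\varphi$ the greatest $Z$ with $Z\subseteq[\![\varphi]\!]\cap\varsigma_\alpha(Z)$, where $\varsigma_\alpha(Z)$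 is Angel's winning region in $\alpha$ for goal $Z$. $\models\psi$ means $\psi$ is valid. Labels. Every node of the syntax tree of a game carries a unique label (equal subgames at different positions get different labels). $\alpha_a$ is a game whose root has label $a$; $\mathrm{nodes}(\alpha_a)$ is the set of labels of its subgames (including $a$). A special label $\mathsf{end}\notin\mathrm{nodes}(\alpha_a)$ is used. A map $S$ assigns formulas to a set of labels containing $\mathrm{nodes}(\alpha_a)\cup\{\mathsf{end}\}$; $S\{\mathsf{end}\mapsto Q\}$ is $S$ with the value at $\mathsf{end}$ replaced by $Q$. Below $\gamma_g,\delta_d$ denote immediate subgames with root labels $g,d$. Game suffix $\mathrm{suffix}_b(\alpha_a)$ for $b\in\mathrm{nodes}(\alpha_a)$: if $b=a$, it is $\alpha_a$. Otherwise: for $\alpha_a=((\gamma_g)^* )_a$ or $((\gamma_g)^\times)_a$ it is $\mathrm{suffix}_b(\gamma_g);\alpha_a$; for $(\gamma_g\cup\delta_d)_a$ or $(\gamma_g\cap\delta_d)_a$ it is $\mathrm{suffix}_b(\gamma_g)$ if $b\in\mathrm{nodes}(\gamma_g)$ and $\mathrm{suffix}_b(\delta_d)$ otherwise; for $(\gamma_g;\delta_d)_a$ it is $\mathrm{suffix}_b(\gamma_g);\delta_d$ if $b\in\mathrm{nodes}(\gamma_g)$ and $\mathrm{suffix}_b(\delta_d)$ otherwise. Game prefix $\mathrm{prefix}_b(\alpha_a)$ for $b\in\mathrm{nodes}(\alpha_a)$: if $b=a$ and $\alpha$ is not a loop, it is $\mathrm{skip}$; if $b=a$ and $\alpha$ is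 a loop ($^*$ or $^\times$), it is $\alpha_a$. Otherwise: for loops $((\gamma_g)^* )_a$, $((\gamma_g)^\times)_a$ it is $\alpha_a;\mathrm{prefix}_b(\gamma_g)$; for $\cup,\cap$ it is the prefix within the branch containing $b$; for $(\gamma_g;\delta_d)_a$ it is $\mathrm{prefix}_b(\gamma_g)$ if $b\in\mathrm{nodes}(\gamma_g)$ and $\gamma_g;\mathrm{prefix}_b(\delta_d)$ otherwise. Angelic subvalue map: a map $S$ with $\models S(b)\rightarrow\langle\mathrm{suffix}_b(\alpha_a)\rangle S(\mathsf{end})$ for all $b\in\mathrm{nodes}(\alpha_a)$; it is compatible with $\varphi$ if $\models S(\mathsf{end})\rightarrow\varphi$. Universal projection $\mathcal{U}(\alpha_a,S)$, defined recursively: $(x:=* )_a\mapsto (x:=\otimes)_a;\,!S(\mathsf{end})$; $\{x'=f(x)\&Q\}_a\mapsto(\{x'=f(x)\&Q\}^d)_a;\,!S(\mathsf{end})$; $(\gamma_g\cup\delta_d)_a\mapsto(!S(g);\mathcal{U}(\gamma_g,S))\cap_a(!S(d);\mathcal{U}(\delta_d,S))$; $((\gamma_g)^* )_a\mapsto\big((!S(g);\mathcal{U}(\gamma_g,S\{\mathsf{end}\mapsto S(a)\}))^{\times}\big)_a;\,!S(\mathsf{end})$; $(\gamma_g;\delta_d)_a\mapsto\mathcal{U}(\gamma_g,S\{\mathsf{end}\mapsto S(d)\});_a\,\mathcal{U}(\delta_d,S)$; $(\gamma_g\cap\delta_d)_a\mapsto\mathcal{U}(\gamma_g,S)\cap_a\mathcal{U}(\delta_d,S)$;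 $((\gamma_g)^\times)_a\mapsto(\mathcal{U}(\gamma_g,S\{\mathsf{end}\mapsto S(a)\})^\times)_a$; $x:=e$, $x:=\otimes$, $?Q$, $!Q$, $\{x'=f(x)\&Q\}^d$ are left unchanged. Labels are preserved (the node replacing the node labeled $a$, e.g. the Demon counterpart $x:=\otimes$, the dual ODE, $\cap$, or the loop $^\times$, keeps label $a$; subgames keep their labels) and newly introduced nodes get fresh labels. *)

theory Defs
  imports "HOL-Analysis.Analysis"
begin

section \<open>Syntax of dGL\<close>

type_synonym var = nat
type_synonym state = "var \<Rightarrow> real"

datatype trm = Var var | Const rat | Neg trm | Plus trm trm | Times trm trm

text \<open>Unlabeled hybrid games and dGL formulas (mutually recursive).
  An ODE system x' = f(x) is a list of pairs (x_i, f_i(x)).\<close>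
datatype fml =
    TrueF | FalseF
  | Geq trm trm | Gt trm trm | Equal trm trm
  | NotF fml | AndF fml fml | OrF fml fml | ImpF fml fml | IffF fml fml
  | ExistsF var fml | ForallF var fml
  | Dia game fml | Box game fml
and game =
    Assign var trm
  | AssignAny var
  | AssignDemon var
  | Test fml
  | DTest fml
  | ODE "(var \<times> trm) list" fml
  | DODE "(var \<times> trm) list" fml
  | Seq game game
  | Choice game game
  | DChoice game game
  | Star game
  | Cross game

definition Skip :: game where "Skip = Test TrueF"

section \<open>Semantics\<close>

primrec tsem :: "trm \<Rightarrow> state \<Rightarrow> real" where
  "tsem (Var x) w = w x"
| "tsem (Const c) w = of_rat c"
| "tsem (Neg e) w = - tsem e w"
| "tsem (Plus e f) w = tsem e w + tsem f w"
| "tsem (Times e f) w = tsem e w * tsem f w"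

definition ode_sol :: "(var \<times> trm) list \<Rightarrow> state set \<Rightarrow> state \<Rightarrow> real \<Rightarrow> (real \<Rightarrow> state) \<Rightarrow> bool" where
  "ode_sol xs D w r y \<longleftrightarrow>
     0 \<le> r \<and> y 0 = w
   \<and> (\<forall>t\<in>{0..r}. y t \<in> D)
   \<and> (\<forall>t\<in>{0..r}. \<forall>z. z \<notin> fst ` set xs \<longrightarrow> y t z = w z)
   \<and> (\<forall>(x,\<theta>)\<in>set xs. \<forall>t\<in>{0..r}.
        ((\<lambda>s. y s x) has_real_derivative tsem \<theta> (y t)) (at t within {0..r}))"

primrec fsem :: "fml \<Rightarrow> state set" and win :: "game \<Rightarrow> state set \<Rightarrow> state set" where
  "fsem TrueF = UNIV"
| "fsem FalseF = {}"
| "fsem (Geq e f) = {w. tsem e w \<ge> tsem f w}"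
| "fsem (Gt e f) = {w. tsem e w > tsem f w}"
| "fsem (Equal e f) = {w. tsem e w = tsem f w}"
| "fsem (NotF p) = - fsem p"
| "fsem (AndF p q) = fsem p \<inter> fsem q"
| "fsem (OrF p q) = fsem p \<union> fsem q"
| "fsem (ImpF p q) = - fsem p \<union> fsem q"
| "fsem (IffF p q) = {w. w \<in> fsem p \<longleftrightarrow> w \<in> fsem q}"
| "fsem (ExistsF x p) = {w. \<exists>v. w(x := v) \<in> fsem p}"
| "fsem (ForallF x p) = {w. \<forall>v. w(x := v) \<in> fsem p}"
| "fsem (Dia a p) = win a (fsem p)"
| "fsem (Box a p) = - win a (- fsem p)"
| "win (Assign x e) X = {w. w(x := tsem e w) \<in> X}"
| "win (AssignAny x) X = {w. \<exists>v. w(x := v) \<in> X}"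
| "win (AssignDemon x) X = {w. \<forall>v. w(x := v) \<in> X}"
| "win (Test Q) X = fsem Q \<inter> X"
| "win (DTest Q) X = - fsem Q \<union> X"
| "win (ODE xs Q) X = {w. \<exists>r y. ode_sol xs (fsem Q) w r y \<and> y r \<in> X}"
| "win (DODE xs Q) X = {w. \<forall>r y. ode_sol xs (fsem Q) w r y \<longrightarrow> y r \<in> X}"
| "win (Seq a b) X = win a (win b X)"
| "win (Choice a b) X = win a X \<union> win b X"
| "win (DChoice a b) X = win a X \<inter> win b X"
| "win (Star a) X = lfp (\<lambda>Z. X \<union> win a Z)"
| "win (Cross a) X = gfp (\<lambda>Z. X \<inter> win a Z)"

definition valid :: "fml \<Rightarrow> bool" where
  "valid p \<longleftrightarrow> (\<forall>w. w \<in> fsem p)"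

section \<open>Labeled games\<close>

datatype 'l lgame =
    LAssign 'l var trm
  | LAssignAny 'l var
  | LAssignDemon 'l var
  | LTest 'l fml
  | LDTest 'l fml
  | LODE 'l "(var \<times> trm) list" fml
  | LDODE 'l "(var \<times> trm) list" fml
  | LSeq 'l "'l lgame" "'l lgame"
  | LChoice 'l "'l lgame" "'l lgame"
  | LDChoice 'l "'l lgame" "'l lgame"
  | LStar 'l "'l lgame"
  | LCross 'l "'l lgame"

primrec label :: "'l lgame \<Rightarrow> 'l" where
  "label (LAssign a x e) = a"
| "label (LAssignAny a x) = a"
| "label (LAssignDemon a x) = a"
| "label (LTest a Q) = a"
| "label (LDTest a Q) = a"
| "label (LODE a xs Q) = a"
| "label (LDODE a xs Q) = a"
| "label (LSeq a g d) = a"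
| "label (LChoice a g d) = a"
| "label (LDChoice a g d) = a"
| "label (LStar a g) = a"
| "label (LCross a g) = a"

primrec labels :: "'l lgame \<Rightarrow> 'l list" where
  "labels (LAssign a x e) = [a]"
| "labels (LAssignAny a x) = [a]"
| "labels (LAssignDemon a x) = [a]"
| "labels (LTest a Q) = [a]"
| "labels (LDTest a Q) = [a]"
| "labels (LODE a xs Q) = [a]"
| "labels (LDODE a xs Q) = [a]"
| "labels (LSeq a g d) = a # labels g @ labels d"
| "labels (LChoice a g d) = a # labels g @ labels d"
| "labels (LDChoice a g d) = a # labels g @ labels d"
| "labels (LStar a g) = a # labels g"
| "labels (LCross a g) = a # labels g"

definition nodes :: "'l lgame \<Rightarrow> 'l set" where
  "nodes g = set (labels g)"

definition well_labeled :: "'l lgame \<Rightarrow> bool" where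
  "well_labeled g \<longleftrightarrow> distinct (labels g)"

primrec erase :: "'l lgame \<Rightarrow> game" where
  "erase (LAssign a x e) = Assign x e"
| "erase (LAssignAny a x) = AssignAny x"
| "erase (LAssignDemon a x) = AssignDemon x"
| "erase (LTest a Q) = Test Q"
| "erase (LDTest a Q) = DTest Q"
| "erase (LODE a xs Q) = ODE xs Q"
| "erase (LDODE a xs Q) = DODE xs Q"
| "erase (LSeq a g d) = Seq (erase g) (erase d)"
| "erase (LChoice a g d) = Choice (erase g) (erase d)"
| "erase (LDChoice a g d) = DChoice (erase g) (erase d)"
| "erase (LStar a g) = Star (erase g)"
| "erase (LCross a g) = Cross (erase g)"

section \<open>Game suffix and prefix\<close>

text \<open>Suffixes and prefixes are only used inside modalities, so they are
  returned as (unlabeled) games.\<close>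
fun suffix :: "'l \<Rightarrow> 'l lgame \<Rightarrow> game" where
  "suffix b (LStar a g) =
     (if b = a then Star (erase g) else Seq (suffix b g) (Star (erase g)))"
| "suffix b (LCross a g) =
     (if b = a then Cross (erase g) else Seq (suffix b g) (Cross (erase g)))"
| "suffix b (LChoice a g d) =
     (if b = a then Choice (erase g) (erase d)
      else if b \<in> nodes g then suffix b g else suffix b d)"
| "suffix b (LDChoice a g d) =
     (if b = a then DChoice (erase g) (erase d)
      else if b \<in> nodes g then suffix b g else suffix b d)"
| "suffix b (LSeq a g d) =
     (if b = a then Seq (erase g) (erase d)
      else if b \<in> nodes g then Seq (suffix b g) (erase d) else suffix b d)"
| "suffix b g = erase g"

fun prefix :: "'l \<Rightarrow> 'l lgame \<Rightarrow> game" where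
  "prefix b (LStar a g) =
     (if b = a then Star (erase g) else Seq (Star (erase g)) (prefix b g))"
| "prefix b (LCross a g) =
     (if b = a then Cross (erase g) else Seq (Cross (erase g)) (prefix b g))"
| "prefix b (LChoice a g d) =
     (if b = a then Skip else if b \<in> nodes g then prefix b g else prefix b d)"
| "prefix b (LDChoice a g d) =
     (if b = a then Skip else if b \<in> nodes g then prefix b g else prefix b d)"
| "prefix b (LSeq a g d) =
     (if b = a then Skip
      else if b \<in> nodes g then prefix b g else Seq (erase g) (prefix b d))"
| "prefix b g = Skip"

section \<open>Subvalue maps and universal projection\<close>

datatype 'l key = L 'l | End

definition angelic_subvalue_map :: "'l lgame \<Rightarrow> ('l key \<Rightarrow> fml) \<Rightarrow> bool" where
  "angelic_subvalue_map \<alpha> S \<longleftrightarrow>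
     (\<forall>b\<in>nodes \<alpha>. valid (ImpF (S (L b)) (Dia (suffix b \<alpha>) (S End))))"

definition compatible :: "('l key \<Rightarrow> fml) \<Rightarrow> fml \<Rightarrow> bool" where
  "compatible S \<phi> \<longleftrightarrow> valid (ImpF (S End) \<phi>)"

text \<open>Labels of the projected game: original labels are kept (Orig a),
  and the i-th node newly introduced when projecting the node labeled a
  gets the fresh label Fresh a i (fresh since labels of \<alpha> are unique).\<close>
datatype 'l plabel = Orig 'l | Fresh 'l nat

primrec relabel :: "'l lgame \<Rightarrow> 'l plabel lgame" where
  "relabel (LAssign a x e) = LAssign (Orig a) x e"
| "relabel (LAssignAny a x) = LAssignAny (Orig a) x"
| "relabel (LAssignDemon a x) = LAssignDemon (Orig a) x"
| "relabel (LTest a Q) = LTest (Orig a) Q"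
| "relabel (LDTest a Q) = LDTest (Orig a) Q"
| "relabel (LODE a xs Q) = LODE (Orig a) xs Q"
| "relabel (LDODE a xs Q) = LDODE (Orig a) xs Q"
| "relabel (LSeq a g d) = LSeq (Orig a) (relabel g) (relabel d)"
| "relabel (LChoice a g d) = LChoice (Orig a) (relabel g) (relabel d)"
| "relabel (LDChoice a g d) = LDChoice (Orig a) (relabel g) (relabel d)"
| "relabel (LStar a g) = LStar (Orig a) (relabel g)"
| "relabel (LCross a g) = LCross (Orig a) (relabel g)"

primrec uproj :: "'l lgame \<Rightarrow> ('l key \<Rightarrow> fml) \<Rightarrow> 'l plabel lgame" where
  "uproj (LAssign a x e) S = LAssign (Orig a) x e"
| "uproj (LAssignAny a x) S =
     LSeq (Fresh a 0) (LAssignDemon (Orig a) x) (LDTest (Fresh a 1) (S End))"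
| "uproj (LAssignDemon a x) S = LAssignDemon (Orig a) x"
| "uproj (LTest a Q) S = LTest (Orig a) Q"
| "uproj (LDTest a Q) S = LDTest (Orig a) Q"
| "uproj (LODE a xs Q) S =
     LSeq (Fresh a 0) (LDODE (Orig a) xs Q) (LDTest (Fresh a 1) (S End))"
| "uproj (LDODE a xs Q) S = LDODE (Orig a) xs Q"
| "uproj (LSeq a g d) S =
     LSeq (Orig a) (uproj g (S(End := S (L (label d))))) (uproj d S)"
| "uproj (LChoice a g d) S =
     LDChoice (Orig a)
       (LSeq (Fresh a 0) (LDTest (Fresh a 1) (S (L (label g)))) (uproj g S))
       (LSeq (Fresh a 2) (LDTest (Fresh a 3) (S (L (label d)))) (uproj d S))"
| "uproj (LDChoice a g d) S = LDChoice (Orig a) (uproj g S) (uproj d S)"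
| "uproj (LStar a g) S =
     LSeq (Fresh a 0)
       (LCross (Orig a)
          (LSeq (Fresh a 1) (LDTest (Fresh a 2) (S (L (label g))))
             (uproj g (S(End := S (L a))))))
       (LDTest (Fresh a 3) (S End))"
| "uproj (LCross a g) S = LCross (Orig a) (uproj g (S(End := S (L a))))"

end

theory Submission
  imports Defs
begin

(* The argument is semantic. Call S a semantic subvalue map for a game towards a goal set K
   if S(end) lies in K and each S(b) in Angel's winning region of suffix_b for K. This
   property descends to subgames, the goal becoming the winning region of whatever follows
   the subgame. Two inductions over the game then show (1) that the universal projection is
   at least as good for Angel as the original game: Angel's choices are handed to Demon, but
   each new Demon move is guarded by a test !S(.) that Demon only passes in states from which
   Angel still wins; and (2) that Angel wins prefix_b of the projection into the winning
   region of suffix_b. Demon's loops are handled by coinduction, with the winning region of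
   the original loop as invariant. *)

section \<open>Winning regions\<close>

lemma win_mono: "X \<subseteq> Y \<Longrightarrow> win G X \<subseteq> win G Y"
proof (induction G arbitrary: X Y)
  case (Star G)
  then show ?case by simp (rule lfp_mono; blast)
next
  case (Cross G)
  then show ?case by simp (rule gfp_mono; blast)
next
  case (Seq G1 G2)
  then show ?case by simp
next
  case (Choice G1 G2)
  then show ?case by (simp only: win.simps) (rule Un_mono; blast)
next
  case (DChoice G1 G2)
  then show ?case by (simp only: win.simps) (rule Int_mono; blast)
qed fastforce+

lemma win_Skip [simp]: "win Skip X = X"
  by (simp add: Skip_def)

lemma win_Cross_unfold: "win (Cross G) X = X \<inter> win G (win (Cross G) X)"
proof -
  have "mono (\<lambda>Z. X \<inter> win G Z)"
    by (rule monoI) (use win_mono in blast)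
  then show ?thesis
    using gfp_unfold by simp
qed

lemma win_Cross_coinduct: "Z \<subseteq> X \<Longrightarrow> Z \<subseteq> win G Z \<Longrightarrow> Z \<subseteq> win (Cross G) X"
  by (simp add: gfp_upperbound)

section \<open>Labels\<close>

lemma nodes_simps [simp]:
  "nodes (LAssign a x e) = {a}"
  "nodes (LAssignAny a x) = {a}"
  "nodes (LAssignDemon a x) = {a}"
  "nodes (LTest a Q) = {a}"
  "nodes (LDTest a Q) = {a}"
  "nodes (LODE a xs Q) = {a}"
  "nodes (LDODE a xs Q) = {a}"
  "nodes (LSeq a g d) = insert a (nodes g \<union> nodes d)"
  "nodes (LChoice a g d) = insert a (nodes g \<union> nodes d)"
  "nodes (LDChoice a g d) = insert a (nodes g \<union> nodes d)"
  "nodes (LStar a g) = insert a (nodes g)"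
  "nodes (LCross a g) = insert a (nodes g)"
  by (auto simp: nodes_def)

lemma label_in_nodes: "label \<alpha> \<in> nodes \<alpha>"
  by (cases \<alpha>) auto

lemma suffix_label [simp]: "suffix (label \<alpha>) \<alpha> = erase \<alpha>"
  by (cases \<alpha>) auto

lemma well_labeled_simps [simp]:
  "well_labeled (LSeq a g d) \<longleftrightarrow>
     well_labeled g \<and> well_labeled d \<and> a \<notin> nodes g \<and> a \<notin> nodes d \<and> nodes g \<inter> nodes d = {}"
  "well_labeled (LChoice a g d) \<longleftrightarrow>
     well_labeled g \<and> well_labeled d \<and> a \<notin> nodes g \<and> a \<notin> nodes d \<and> nodes g \<inter> nodes d = {}"
  "well_labeled (LDChoice a g d) \<longleftrightarrow>
     well_labeled g \<and> well_labeled d \<and> a \<notin> nodes g \<and> a \<notin> nodes d \<and> nodes g \<inter> nodes d = {}"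
  "well_labeled (LStar a g) \<longleftrightarrow> well_labeled g \<and> a \<notin> nodes g"
  "well_labeled (LCross a g) \<longleftrightarrow> well_labeled g \<and> a \<notin> nodes g"
  by (auto simp: well_labeled_def nodes_def)

lemma Orig_in_nodes_uproj [simp]: "Orig b \<in> nodes (uproj \<alpha> S) \<longleftrightarrow> b \<in> nodes \<alpha>"
  by (induction \<alpha> arbitrary: S) auto

section \<open>Semantic subvalue maps\<close>

definition semantic_subvalue_map :: "'l lgame \<Rightarrow> ('l key \<Rightarrow> fml) \<Rightarrow> state set \<Rightarrow> bool" where
  "semantic_subvalue_map \<alpha> S K \<longleftrightarrow>
     fsem (S End) \<subseteq> K \<and> (\<forall>b\<in>nodes \<alpha>. fsem (S (L b)) \<subseteq> win (suffix b \<alpha>) K)"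

lemma semantic_subvalue_map_if_compatible:
  assumes "angelic_subvalue_map \<alpha> S" and "compatible S \<phi>"
  shows "semantic_subvalue_map \<alpha> S (fsem \<phi>)"
proof -
  have end_sub: "fsem (S End) \<subseteq> fsem \<phi>"
    using assms(2) by (auto simp: compatible_def valid_def)
  have "fsem (S (L b)) \<subseteq> win (suffix b \<alpha>) (fsem \<phi>)" if "b \<in> nodes \<alpha>" for b
  proof -
    have "fsem (S (L b)) \<subseteq> win (suffix b \<alpha>) (fsem (S End))"
      using assms(1) that by (auto simp: angelic_subvalue_map_def valid_def)
    also have "\<dots> \<subseteq> win (suffix b \<alpha>) (fsem \<phi>)"
      by (rule win_mono[OF end_sub])
    finally show ?thesis .
  qed
  with end_sub show ?thesis
    by (simp add: semantic_subvalue_map_def)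
qed

lemma semantic_subvalue_mapI:
  assumes "fsem (S End) \<subseteq> K" and "\<And>b. b \<in> nodes \<alpha> \<Longrightarrow> fsem (S (L b)) \<subseteq> win (suffix b \<alpha>) K"
  shows "semantic_subvalue_map \<alpha> S K"
  using assms by (simp add: semantic_subvalue_map_def)

lemma semantic_subvalue_mapD:
  assumes "semantic_subvalue_map \<alpha> S K"
  shows semantic_subvalue_map_End: "fsem (S End) \<subseteq> K"
    and semantic_subvalue_map_node: "b \<in> nodes \<alpha> \<Longrightarrow> fsem (S (L b)) \<subseteq> win (suffix b \<alpha>) K"
  using assms by (auto simp: semantic_subvalue_map_def)

lemma semantic_subvalue_map_Compl_End_Un:
  "semantic_subvalue_map \<alpha> S K \<Longrightarrow> - fsem (S End) \<union> K = UNIV"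
  using semantic_subvalue_map_End by fastforce

lemma semantic_subvalue_map_label:
  "semantic_subvalue_map \<alpha> S K \<Longrightarrow> fsem (S (L (label \<alpha>))) \<subseteq> win (erase \<alpha>) K"
  using semantic_subvalue_map_node[OF _ label_in_nodes] by simp

lemma semantic_subvalue_map_subgame:
  assumes "semantic_subvalue_map \<alpha> S K" and "fsem (S' End) \<subseteq> K'"
    and "\<And>b. b \<in> nodes \<gamma> \<Longrightarrow>
           b \<in> nodes \<alpha> \<and> S' (L b) = S (L b) \<and> win (suffix b \<alpha>) K = win (suffix b \<gamma>) K'"
  shows "semantic_subvalue_map \<gamma> S' K'"
  using assms semantic_subvalue_map_node[OF assms(1)] by (intro semantic_subvalue_mapI) metis+

lemma semantic_subvalue_map_LSeq:
  assumes wl: "well_labeled (LSeq a g d)" and S: "semantic_subvalue_map (LSeq a g d) S K"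
  shows "semantic_subvalue_map g (S(End := S (L (label d)))) (win (erase d) K)"
    and "semantic_subvalue_map d S K"
proof -
  have "label d \<in> nodes (LSeq a g d)" "label d \<noteq> a" "label d \<notin> nodes g"
    using wl label_in_nodes[of d] by auto
  then have "fsem (S (L (label d))) \<subseteq> win (erase d) K"
    using semantic_subvalue_map_node[OF S, of "label d"] by simp
  then show "semantic_subvalue_map g (S(End := S (L (label d)))) (win (erase d) K)"
    using wl by (intro semantic_subvalue_map_subgame[OF S]) auto
  show "semantic_subvalue_map d S K"
    using wl semantic_subvalue_map_End[OF S] by (intro semantic_subvalue_map_subgame[OF S]) auto
qed

lemma semantic_subvalue_map_LChoice:
  assumes wl: "well_labeled (LChoice a g d)" and S: "semantic_subvalue_map (LChoice a g d) S K"
  shows "semantic_subvalue_map g S K" and "semantic_subvalue_map d S K"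
  using wl semantic_subvalue_map_End[OF S] by (intro semantic_subvalue_map_subgame[OF S]; auto)+

lemma semantic_subvalue_map_LDChoice:
  assumes wl: "well_labeled (LDChoice a g d)" and S: "semantic_subvalue_map (LDChoice a g d) S K"
  shows "semantic_subvalue_map g S K" and "semantic_subvalue_map d S K"
  using wl semantic_subvalue_map_End[OF S] by (intro semantic_subvalue_map_subgame[OF S]; auto)+

lemma semantic_subvalue_map_LStar:
  assumes wl: "well_labeled (LStar a g)" and S: "semantic_subvalue_map (LStar a g) S K"
  shows "semantic_subvalue_map g (S(End := S (L a))) (win (Star (erase g)) K)"
  using wl semantic_subvalue_map_node[OF S, of a] by (intro semantic_subvalue_map_subgame[OF S]) auto

lemma semantic_subvalue_map_LCross:
  assumes wl: "well_labeled (LCross a g)" and S: "semantic_subvalue_map (LCross a g) S K"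
  shows "semantic_subvalue_map g (S(End := S (L a))) (win (Cross (erase g)) K)"
  using wl semantic_subvalue_map_node[OF S, of a] by (intro semantic_subvalue_map_subgame[OF S]) auto

section \<open>The universal projection\<close>

lemma win_erase_subset_win_uproj:
  assumes "well_labeled \<alpha>" and "semantic_subvalue_map \<alpha> S K"
  shows "win (erase \<alpha>) K \<subseteq> win (erase (uproj \<alpha> S)) K"
  using assms
proof (induction \<alpha> arbitrary: S K)
  case (LAssignAny a x)
  then show ?case
    by (simp add: semantic_subvalue_map_Compl_End_Un[OF LAssignAny.prems(2)])
next
  case (LODE a xs Q)
  then show ?case
    by (simp add: semantic_subvalue_map_Compl_End_Un[OF LODE.prems(2)])
next
  case (LSeq a g d)
  let ?S = "S(End := S (L (label d)))"
  have wl: "well_labeled g" "well_labeled d"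
    using LSeq.prems(1) by simp_all
  have "win (erase g) (win (erase d) K) \<subseteq> win (erase (uproj g ?S)) (win (erase d) K)"
    by (rule LSeq.IH(1)[OF wl(1) semantic_subvalue_map_LSeq(1)[OF LSeq.prems]])
  also have "\<dots> \<subseteq> win (erase (uproj g ?S)) (win (erase (uproj d S)) K)"
    by (intro win_mono LSeq.IH(2)[OF wl(2) semantic_subvalue_map_LSeq(2)[OF LSeq.prems]])
  finally show ?case
    by simp
next
  case (LChoice a g d)
  note sub = semantic_subvalue_map_LChoice[OF LChoice.prems]
  have wl: "well_labeled g" "well_labeled d"
    using LChoice.prems(1) by simp_all
  have "win (erase g) K \<subseteq> win (erase (uproj g S)) K" "win (erase d) K \<subseteq> win (erase (uproj d S)) K"
    by (rule LChoice.IH(1)[OF wl(1) sub(1)], rule LChoice.IH(2)[OF wl(2) sub(2)])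
  moreover note sub[THEN semantic_subvalue_map_label]
  ultimately show ?case
    by auto
next
  case (LDChoice a g d)
  note sub = semantic_subvalue_map_LDChoice[OF LDChoice.prems]
  have wl: "well_labeled g" "well_labeled d"
    using LDChoice.prems(1) by simp_all
  have "win (erase g) K \<subseteq> win (erase (uproj g S)) K" "win (erase d) K \<subseteq> win (erase (uproj d S)) K"
    by (rule LDChoice.IH(1)[OF wl(1) sub(1)], rule LDChoice.IH(2)[OF wl(2) sub(2)])
  then show ?case
    by auto
next
  case (LStar a g)
  let ?S = "S(End := S (L a))" and ?W = "win (Star (erase g)) K"
  note sub = semantic_subvalue_map_LStar[OF LStar.prems]
  have wl: "well_labeled g"
    using LStar.prems(1) by simp
  have "fsem (S (L (label g))) \<subseteq> win (erase g) ?W"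
    using semantic_subvalue_map_label[OF sub] by simp
  also have "\<dots> \<subseteq> win (erase (uproj g ?S)) ?W"
    by (rule LStar.IH[OF wl sub])
  also have "\<dots> \<subseteq> win (erase (uproj g ?S)) UNIV"
    by (rule win_mono) simp
  finally have "UNIV \<subseteq> win (Cross (Seq (DTest (S (L (label g)))) (erase (uproj g ?S)))) UNIV"
    by (intro win_Cross_coinduct) auto
  \<comment> \<open>Demon can only stop the loop by passing !S(end), whose complement together with K is everything.\<close>
  then show ?case
    using semantic_subvalue_map_Compl_End_Un[OF LStar.prems(2)] by auto
next
  case (LCross a g)
  let ?S = "S(End := S (L a))" and ?W = "win (Cross (erase g)) K"
  have wl: "well_labeled g"
    using LCross.prems(1) by simp
  have "?W \<subseteq> win (erase g) ?W"
    using win_Cross_unfold[of "erase g" K] by blast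
  also have "\<dots> \<subseteq> win (erase (uproj g ?S)) ?W"
    by (rule LCross.IH[OF wl semantic_subvalue_map_LCross[OF LCross.prems]])
  finally have "?W \<subseteq> win (Cross (erase (uproj g ?S))) K"
    using win_Cross_unfold[of "erase g" K] by (intro win_Cross_coinduct) blast+
  then show ?case
    by simp
qed simp_all

lemma win_erase_subset_win_prefix_suffix:
  assumes "well_labeled \<alpha>" and "semantic_subvalue_map \<alpha> S K" and "b \<in> nodes \<alpha>"
  shows "win (erase \<alpha>) K \<subseteq> win (prefix (Orig b) (uproj \<alpha> S)) (win (suffix b \<alpha>) K)"
  using assms
proof (induction \<alpha> arbitrary: S K)
  case (LSeq a g d)
  let ?S = "S(End := S (L (label d)))"
  note sub = semantic_subvalue_map_LSeq[OF LSeq.prems(1,2)]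
  have wl: "well_labeled g" "well_labeled d"
    using LSeq.prems(1) by simp_all
  consider "b = a" | "b \<in> nodes g" "b \<noteq> a" | "b \<in> nodes d" "b \<noteq> a" "b \<notin> nodes g"
    using LSeq.prems(3) by auto
  then show ?case
  proof cases
    case 1
    then show ?thesis by simp
  next
    case 2
    have "win (erase g) (win (erase d) K)
          \<subseteq> win (prefix (Orig b) (uproj g ?S)) (win (suffix b g) (win (erase d) K))"
      by (rule LSeq.IH(1)[OF wl(1) sub(1) \<open>b \<in> nodes g\<close>])
    with 2 show ?thesis by simp
  next
    case 3
    have "win (erase g) (win (erase d) K) \<subseteq> win (erase (uproj g ?S)) (win (erase d) K)"
      by (rule win_erase_subset_win_uproj[OF wl(1) sub(1)])
    also have "\<dots> \<subseteq> win (erase (uproj g ?S)) (win (prefix (Orig b) (uproj d S)) (win (suffix b d) K))"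
      by (intro win_mono LSeq.IH(2)[OF wl(2) sub(2) \<open>b \<in> nodes d\<close>])
    finally show ?thesis
      using 3 by simp
  qed
next
  case (LChoice a g d)
  note sub = semantic_subvalue_map_LChoice[OF LChoice.prems(1,2)]
  have wl: "well_labeled g" "well_labeled d"
    using LChoice.prems(1) by simp_all
  consider "b = a" | "b \<in> nodes g" "b \<noteq> a" | "b \<in> nodes d" "b \<noteq> a" "b \<notin> nodes g"
    using LChoice.prems(3) by auto
  then show ?case
  proof cases
    case 1
    then show ?thesis by simp
  next
    case 2
    have "win (erase g) K \<subseteq> win (prefix (Orig b) (uproj g S)) (win (suffix b g) K)"
      by (rule LChoice.IH(1)[OF wl(1) sub(1) \<open>b \<in> nodes g\<close>])
    with 2 semantic_subvalue_map_label[OF sub(1)] show ?thesis by auto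
  next
    case 3
    have "win (erase d) K \<subseteq> win (prefix (Orig b) (uproj d S)) (win (suffix b d) K)"
      by (rule LChoice.IH(2)[OF wl(2) sub(2) \<open>b \<in> nodes d\<close>])
    with 3 semantic_subvalue_map_label[OF sub(2)] show ?thesis by auto
  qed
next
  case (LDChoice a g d)
  note sub = semantic_subvalue_map_LDChoice[OF LDChoice.prems(1,2)]
  have wl: "well_labeled g" "well_labeled d"
    using LDChoice.prems(1) by simp_all
  consider "b = a" | "b \<in> nodes g" "b \<noteq> a" | "b \<in> nodes d" "b \<noteq> a" "b \<notin> nodes g"
    using LDChoice.prems(3) by auto
  then show ?case
  proof cases
    case 1
    then show ?thesis by simp
  next
    case 2
    with LDChoice.IH(1)[OF wl(1) sub(1)] show ?thesis by auto
  next
    case 3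
    with LDChoice.IH(2)[OF wl(2) sub(2)] show ?thesis by auto
  qed
next
  case (LStar a g)
  let ?S = "S(End := S (L a))" and ?W = "win (Star (erase g)) K"
  let ?body = "Seq (DTest (S (L (label g)))) (erase (uproj g ?S))"
  note sub = semantic_subvalue_map_LStar[OF LStar.prems(1,2)]
  have wl: "well_labeled g"
    using LStar.prems(1) by simp
  have start: "fsem (S (L (label g))) \<subseteq> win (erase g) ?W"
    using semantic_subvalue_map_label[OF sub] by simp
  have invariant: "?W \<subseteq> win ?body ?W"
    using start win_erase_subset_win_uproj[OF wl sub] by auto
  show ?case
  proof (cases "b = a")
    case True
    have "?W \<subseteq> win (Cross ?body) ?W"
      by (rule win_Cross_coinduct[OF subset_refl invariant])
    with True show ?thesis by simp
  next
    case False
    with LStar.prems(3) have "b \<in> nodes g" by simp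
    with start have "?W \<subseteq> - fsem (S (L (label g))) \<union>
                            win (prefix (Orig b) (uproj g ?S)) (win (suffix b g) ?W)"
      using LStar.IH[OF wl sub] by blast
    then have "?W \<subseteq> win (Cross ?body) (- fsem (S (L (label g))) \<union>
                                  win (prefix (Orig b) (uproj g ?S)) (win (suffix b g) ?W))"
      by (rule win_Cross_coinduct[OF _ invariant])
    with False \<open>b \<in> nodes g\<close> show ?thesis by simp
  qed
next
  case (LCross a g)
  let ?S = "S(End := S (L a))" and ?W = "win (Cross (erase g)) K"
  note sub = semantic_subvalue_map_LCross[OF LCross.prems(1,2)]
  have wl: "well_labeled g"
    using LCross.prems(1) by simp
  have unfold: "?W \<subseteq> win (erase g) ?W"
    using win_Cross_unfold[of "erase g" K] by blast
  have invariant: "?W \<subseteq> win (erase (uproj g ?S)) ?W"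
    using unfold win_erase_subset_win_uproj[OF wl sub] by blast
  show ?case
  proof (cases "b = a")
    case True
    have "?W \<subseteq> win (Cross (erase (uproj g ?S))) ?W"
      by (rule win_Cross_coinduct[OF subset_refl invariant])
    with True show ?thesis by simp
  next
    case False
    with LCross.prems(3) have "b \<in> nodes g" by simp
    with unfold have "?W \<subseteq> win (prefix (Orig b) (uproj g ?S)) (win (suffix b g) ?W)"
      using LCross.IH[OF wl sub] by blast
    then have "?W \<subseteq> win (Cross (erase (uproj g ?S)))
                 (win (prefix (Orig b) (uproj g ?S)) (win (suffix b g) ?W))"
      by (rule win_Cross_coinduct[OF _ invariant])
    with False \<open>b \<in> nodes g\<close> show ?thesis by simp
  qed
qed simp_all

theorem mainTheorem1:
  fixes \<alpha> :: "'l lgame" and \<phi> :: fml and S :: "'l key \<Rightarrow> fml"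
  assumes "well_labeled \<alpha>"
    and "angelic_subvalue_map \<alpha> S"
    and "compatible S \<phi>"
  shows "\<forall>b\<in>nodes \<alpha>. \<forall>w. w \<in> fsem (S (L (label \<alpha>))) \<longrightarrow>
           w \<in> fsem (Dia (prefix (Orig b) (uproj \<alpha> S)) (Dia (suffix b \<alpha>) \<phi>))"
proof -
  have sub: "semantic_subvalue_map \<alpha> S (fsem \<phi>)"
    using assms(2,3) by (rule semantic_subvalue_map_if_compatible)
  then have "fsem (S (L (label \<alpha>))) \<subseteq> win (erase \<alpha>) (fsem \<phi>)"
    by (rule semantic_subvalue_map_label)
  with win_erase_subset_win_prefix_suffix[OF assms(1) sub] show ?thesis
    by auto
qed

end
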